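(* Let $p=\tfrac12$, $\mu=\mu_{1/2}$, and fix $m\ge0$. Let $\phi=1_C$ and $h_w=1_{C_{w0}}-1_{C_{w2}}$ for words $|w|\le m-1$. Then $\{\phi\}\cup\{h_w:|w|\le m-1\}$ is an orthogonal basis of $\mathcal F_m$, and $K_m$ is diagonal in this basis: $K_m\phi=(2-2^{-m})\phi$, and if $|w|=\ell$ with $0\le\ell\le m-1$, then $K_mh_w=2^{-\ell}(1-2^{-(m-\ell)})h_w$. Equivalently, $$K_m=\sum_{n=0}^m2^{-n}E_n$$ as an operator on $L^2(\mu)$.
   Context: Let $S_0(x)=x/3$, $S_2(x)=(x+2)/3$ on $[0,1]$ and let $C$ be the middle-third Cantor set. $\mu=\mu_{1/2}$ is the unique Borel probability measure on $[0,1]$ with $\mu=\frac12\mu\circ S_0^{-1}+\frac12\mu\circ S_2^{-1}$. For words $w\in\{0,2\}^n$, $|w|=n$, $S_w=S_{w_1}\circ\cdots\circ S_{w_n}$ ($S_\varnothing=\mathrm{id}$), $C_w=S_w(C)$; $wa$ is concatenation. Inner product $\langle f,g\rangle=\int\overline fg\,d\mu$. $\mathcal F_m=\mathrm{span}\{1_{C_u}:|u|\le m\}$, $K_mf=\sum_{|u|\le m}\langle1_{C_u},f\rangle1_{C_u}$, and $E_n$ is the conditional expectation (orthogonal projection) onto the functions constant on each level-$n$ cylinder $C_w$, $|w|=n$. *)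

theory Defs
  imports "HOL-Probability.Probability"
begin

definition S :: "nat \<Rightarrow> real \<Rightarrow> real" where
  "S a x = (x + real a) / 3"

definition word :: "nat list \<Rightarrow> bool" where
  "word w \<longleftrightarrow> set w \<subseteq> {0, 2}"

definition words_eq :: "nat \<Rightarrow> nat list set" where
  "words_eq n = {w. word w \<and> length w = n}"

definition words_le :: "nat \<Rightarrow> nat list set" where
  "words_le n = {w. word w \<and> length w \<le> n}"

definition Sw :: "nat list \<Rightarrow> real \<Rightarrow> real" where
  "Sw w = foldr (\<lambda>a g. S a \<circ> g) w id"

definition Cantor :: "real set" where
  "Cantor = (\<Inter>n. \<Union>w\<in>words_eq n. Sw w ` {0..1})"

definition Cyl :: "nat list \<Rightarrow> real set" where
  "Cyl w = Sw w ` Cantor"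

text \<open>Hypotheses characterising mu_{1/2}: a Borel probability measure on [0,1]
  with mu = 1/2 mu o S_0^{-1} + 1/2 mu o S_2^{-1}.\<close>
definition cantor_measure :: "real measure \<Rightarrow> bool" where
  "cantor_measure M \<longleftrightarrow> prob_space M \<and> sets M = sets borel \<and>
     emeasure M {0..1} = 1 \<and>
     (\<forall>A\<in>sets borel. emeasure M A =
        (emeasure M (S 0 -` A \<inter> {0..1}) + emeasure M (S 2 -` A \<inter> {0..1})) / 2)"

definition L2 :: "real measure \<Rightarrow> (real \<Rightarrow> complex) \<Rightarrow> bool" where
  "L2 M f \<longleftrightarrow> f \<in> borel_measurable M \<and> integrable M (\<lambda>x. (cmod (f x))\<^sup>2)"

definition ip :: "real measure \<Rightarrow> (real \<Rightarrow> complex) \<Rightarrow> (real \<Rightarrow> complex) \<Rightarrow> complex" where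
  "ip M f g = integral\<^sup>L M (\<lambda>x. cnj (f x) * g x)"

definition ind :: "real set \<Rightarrow> real \<Rightarrow> complex" where
  "ind A x = (if x \<in> A then 1 else 0)"

definition Fm :: "nat \<Rightarrow> (real \<Rightarrow> complex) set" where
  "Fm m = {f. \<exists>c. f = (\<lambda>x. \<Sum>u\<in>words_le m. c u * ind (Cyl u) x)}"

definition Km :: "real measure \<Rightarrow> nat \<Rightarrow> (real \<Rightarrow> complex) \<Rightarrow> real \<Rightarrow> complex" where
  "Km M m f = (\<lambda>x. \<Sum>u\<in>words_le m. ip M (ind (Cyl u)) f * ind (Cyl u) x)"

definition Gn :: "nat \<Rightarrow> (real \<Rightarrow> complex) set" where
  "Gn n = {g. \<exists>c. g = (\<lambda>x. \<Sum>w\<in>words_eq n. c w * ind (Cyl w) x)}"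

definition En :: "real measure \<Rightarrow> nat \<Rightarrow> (real \<Rightarrow> complex) \<Rightarrow> real \<Rightarrow> complex" where
  "En M n f = (SOME g. g \<in> Gn n \<and> (\<forall>h\<in>Gn n. ip M h (\<lambda>x. f x - g x) = 0))"

definition orthogonal_basis :: "real measure \<Rightarrow> 'i set \<Rightarrow> ('i \<Rightarrow> real \<Rightarrow> complex)
    \<Rightarrow> (real \<Rightarrow> complex) set \<Rightarrow> bool" where
  "orthogonal_basis M I b V \<longleftrightarrow> finite I \<and>
     (\<forall>i\<in>I. L2 M (b i) \<and> ip M (b i) (b i) \<noteq> 0) \<and>
     (\<forall>i\<in>I. \<forall>j\<in>I. i \<noteq> j \<longrightarrow> ip M (b i) (b j) = 0) \<and>
     V = {f. \<exists>c. f = (\<lambda>x. \<Sum>i\<in>I. c i * b i x)}"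

definition phi :: "real \<Rightarrow> complex" where
  "phi = ind Cantor"

definition haar :: "nat list \<Rightarrow> real \<Rightarrow> complex" where
  "haar w = (\<lambda>x. ind (Cyl (w @ [0])) x - ind (Cyl (w @ [2])) x)"

definition basis_fun :: "nat list option \<Rightarrow> real \<Rightarrow> complex" where
  "basis_fun i = (case i of None \<Rightarrow> phi | Some w \<Rightarrow> haar w)"

end

theory Submission
  imports Defs
begin

(* Self-similarity gives mu(S_a A) = mu(A)/2 for Borel A in [0,1], and every stage of the
   construction of C has full measure, so mu(C_w) = 2^-|w|. Since cylinders of equal length are
   disjoint and every cylinder lies inside the cylinders of its prefixes, <1_{C_u}, 1_{C_v}> is
   2^-|u| if v is a prefix of u and 0 otherwise. This gives the orthogonality relations, the
   formula E_n f = sum_{|w|=n} 2^n <1_{C_w}, f> 1_{C_w}, and, grouping the words in K_m by length,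
   K_m = sum_{n<=m} 2^-n E_n. Finally E_n phi = phi, while h_w is orthogonal to every cylinder of
   length at most |w| and a combination of the cylinders of any greater length, so E_n h_w is 0
   for n <= |w| and h_w otherwise; summing the geometric series gives the eigenvalues. *)

lemma Sw_Nil [simp]: "Sw [] = id"
  by (simp add: Sw_def)

lemma Sw_Cons [simp]: "Sw (a # w) = S a \<circ> Sw w"
  by (simp add: Sw_def)

lemma Sw_append: "Sw (u @ v) = Sw u \<circ> Sw v"
  by (induction u) (auto simp: comp_assoc)

lemma word_Nil [simp]: "word []"
  by (simp add: word_def)

lemma word_Cons [simp]: "word (a # w) \<longleftrightarrow> (a = 0 \<or> a = 2) \<and> word w"
  by (auto simp: word_def)

lemma word_append [simp]: "word (u @ v) \<longleftrightarrow> word u \<and> word v"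
  by (auto simp: word_def)

lemma word_take: "word w \<Longrightarrow> word (take k w)"
  by (auto simp: word_def dest: in_set_takeD)

lemma word_drop: "word w \<Longrightarrow> word (drop k w)"
  by (auto simp: word_def dest: in_set_dropD)

lemma finite_words_le: "finite (words_le n)"
proof -
  have "words_le n = {w. set w \<subseteq> {0, 2} \<and> length w \<le> n}"
    by (auto simp: words_le_def word_def)
  then show ?thesis
    using finite_lists_length_le[of "{0, 2}" n] by simp
qed

lemma finite_words_eq: "finite (words_eq n)"
  by (rule finite_subset[OF _ finite_words_le[of n]]) (auto simp: words_eq_def words_le_def)

lemma sum_words_le_by_length:
  "(\<Sum>u\<in>words_le m. g u) = (\<Sum>n\<le>m. \<Sum>u\<in>words_eq n. g u)"
proof -
  have "words_le m = (\<Union>n\<le>m. words_eq n)"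
    by (auto simp: words_le_def words_eq_def)
  then show ?thesis
    by (simp only:) (rule sum.UNION_disjoint, auto simp: finite_words_eq, auto simp: words_eq_def)
qed

lemma inj_S: "inj (S a)"
  by (rule injI) (simp add: S_def)

lemma S_mem_unit_interval: "a = 0 \<or> a = 2 \<Longrightarrow> x \<in> {0..1} \<Longrightarrow> S a x \<in> {0..1}"
  by (auto simp: S_def)

lemma S_neq_S:
  "a = 0 \<or> a = 2 \<Longrightarrow> b = 0 \<or> b = 2 \<Longrightarrow> a \<noteq> b \<Longrightarrow> x \<in> {0..1} \<Longrightarrow> y \<in> {0..1} \<Longrightarrow>
    S a x \<noteq> S b y"
  by (auto simp: S_def)

lemma continuous_on_Sw: "continuous_on A (Sw w)"
proof (induction w arbitrary: A)
  case (Cons a w)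
  have "continuous_on UNIV (S a)"
    unfolding S_def by (intro continuous_intros) auto
  then show ?case
    using Cons.IH by (auto intro: continuous_on_compose2)
qed simp

definition cantor_level :: "nat \<Rightarrow> real set" where
  "cantor_level n = (\<Union>w\<in>words_eq n. Sw w ` {0..1})"

lemma Cantor_eq_Inter_cantor_level: "Cantor = (\<Inter>n. cantor_level n)"
  by (simp add: Cantor_def cantor_level_def)

lemma cantor_level_0: "cantor_level 0 = {0..1}"
  by (auto simp: cantor_level_def words_eq_def)

lemma cantor_level_Suc: "cantor_level (Suc n) = S 0 ` cantor_level n \<union> S 2 ` cantor_level n"
proof -
  have "words_eq (Suc n) = (\<Union>a\<in>{0, 2}. (#) a ` words_eq n)"
    by (auto simp: words_eq_def length_Suc_conv)
  then show ?thesis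
    by (auto simp: cantor_level_def image_UN image_comp)
qed

lemma cantor_level_subset: "cantor_level n \<subseteq> {0..1}"
  by (induction n) (auto simp: cantor_level_0 cantor_level_Suc intro: S_mem_unit_interval)

lemma closed_cantor_level: "closed (cantor_level n)"
  unfolding cantor_level_def
  by (intro closed_UN finite_words_eq ballI compact_imp_closed compact_continuous_image
      continuous_on_Sw compact_Icc)

lemma Cantor_subset: "Cantor \<subseteq> {0..1}"
  using cantor_level_0 by (auto simp: Cantor_eq_Inter_cantor_level)

lemma compact_Cantor: "compact Cantor"
proof -
  have "bounded Cantor"
    using bounded_subset[OF bounded_cbox[of 0 "1::real"]] Cantor_subset by (simp add: cbox_interval)
  moreover have "closed Cantor"
    unfolding Cantor_eq_Inter_cantor_level by (simp add: closed_INT closed_cantor_level)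
  ultimately show ?thesis
    by (simp add: compact_eq_bounded_closed)
qed

lemma Cantor_self_similar: "Cantor = S 0 ` Cantor \<union> S 2 ` Cantor"
proof
  show "S 0 ` Cantor \<union> S 2 ` Cantor \<subseteq> Cantor"
  proof -
    have "S a x \<in> cantor_level n" if "a = 0 \<or> a = 2" "x \<in> Cantor" for a x n
    proof (cases n)
      case 0
      then show ?thesis
        using S_mem_unit_interval[OF that(1)] that(2) Cantor_subset by (auto simp: cantor_level_0)
    next
      case (Suc k)
      then show ?thesis
        using that by (auto simp: cantor_level_Suc Cantor_eq_Inter_cantor_level)
    qed
    then show ?thesis
      by (auto simp: Cantor_eq_Inter_cantor_level)
  qed
  show "Cantor \<subseteq> S 0 ` Cantor \<union> S 2 ` Cantor"
  proof
    fix x assume x: "x \<in> Cantor"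
    then have "x \<in> cantor_level (Suc 0)"
      by (simp add: Cantor_eq_Inter_cantor_level)
    then have "x \<in> S 0 ` {0..1} \<union> S 2 ` {0..1}"
      by (simp add: cantor_level_Suc cantor_level_0)
    then obtain a y where a: "a = 0 \<or> a = 2" and y: "y \<in> {0..1}" and "x = S a y"
      by blast
    have "y \<in> cantor_level n" for n
    proof -
      have "x \<in> cantor_level (Suc n)"
        using x by (simp add: Cantor_eq_Inter_cantor_level)
      then obtain b z where b: "b = 0 \<or> b = 2" and z: "z \<in> cantor_level n" and "x = S b z"
        by (auto simp: cantor_level_Suc)
      moreover have "b = a"
      proof (rule ccontr)
        assume "b \<noteq> a"
        moreover have "z \<in> {0..1}"
          using z cantor_level_subset by blast
        ultimately have "S b z \<noteq> S a y"
          using S_neq_S[OF b a] y by blast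
        then show False
          using \<open>x = S a y\<close> \<open>x = S b z\<close> by simp
      qed
      ultimately show ?thesis
        using \<open>x = S a y\<close> inj_S[of a] by (auto dest: injD)
    qed
    then show "x \<in> S 0 ` Cantor \<union> S 2 ` Cantor"
      using a \<open>x = S a y\<close> by (auto simp: Cantor_eq_Inter_cantor_level)
  qed
qed

lemma Cyl_Nil [simp]: "Cyl [] = Cantor"
  by (simp add: Cyl_def)

lemma Cyl_Cons: "Cyl (a # w) = S a ` Cyl w"
  by (simp add: Cyl_def image_comp)

lemma Cyl_append: "Cyl (u @ v) = Sw u ` Cyl v"
  by (simp add: Cyl_def Sw_append image_comp)

lemma Cyl_subset_Cantor: "word w \<Longrightarrow> Cyl w \<subseteq> Cantor"
proof (induction w)
  case (Cons a w)
  then have "S a ` Cyl w \<subseteq> S a ` Cantor"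
    by auto
  also have "\<dots> \<subseteq> Cantor"
    using Cons.prems by (subst (2) Cantor_self_similar) auto
  finally show ?case
    by (simp add: Cyl_Cons)
qed simp

lemma Cyl_append_subset: "word v \<Longrightarrow> Cyl (u @ v) \<subseteq> Cyl u"
  unfolding Cyl_append by (metis Cyl_def Cyl_subset_Cantor image_mono)

lemma Cyl_subset_take: "word w \<Longrightarrow> Cyl w \<subseteq> Cyl (take k w)"
  using Cyl_append_subset[of "drop k w" "take k w"] by (simp add: word_drop)

lemma Cyl_split: "Cyl w = Cyl (w @ [0]) \<union> Cyl (w @ [2])"
  using arg_cong[OF Cantor_self_similar, of "image (Sw w)"]
  by (simp add: Cyl_def Sw_append image_Un image_comp)

lemma compact_Cyl: "compact (Cyl w)"
  unfolding Cyl_def by (intro compact_continuous_image continuous_on_Sw compact_Cantor)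

lemma Cyl_borel: "Cyl w \<in> sets borel"
  by (intro borel_closed compact_imp_closed compact_Cyl)

lemma Cyl_disjoint:
  "word u \<Longrightarrow> word v \<Longrightarrow> length u = length v \<Longrightarrow> u \<noteq> v \<Longrightarrow> Cyl u \<inter> Cyl v = {}"
proof (induction u arbitrary: v)
  case (Cons a u)
  then obtain b v' where v: "v = b # v'"
    by (cases v) auto
  show ?case
  proof (cases "a = b")
    case True
    then have "Cyl u \<inter> Cyl v' = {}"
      using Cons v by auto
    then show ?thesis
      using True v inj_S[of a] by (auto simp: Cyl_Cons dest: injD)
  next
    case False
    have "Cyl u \<subseteq> {0..1}" "Cyl v' \<subseteq> {0..1}"
      using Cons.prems v Cyl_subset_Cantor Cantor_subset by auto
    show ?thesis
    proof (rule equals0I)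
      fix x assume "x \<in> Cyl (a # u) \<inter> Cyl v"
      then obtain y z where "y \<in> Cyl u" "z \<in> Cyl v'" "x = S a y" "x = S b z"
        by (auto simp: Cyl_Cons v)
      moreover have "a = 0 \<or> a = 2" "b = 0 \<or> b = 2"
        using Cons.prems v by auto
      ultimately show False
        using S_neq_S[of a b] False \<open>Cyl u \<subseteq> {0..1}\<close> \<open>Cyl v' \<subseteq> {0..1}\<close> by blast
    qed
  qed
qed simp

lemma Cyl_Int_Cyl:
  assumes "word u" "word v" "length v \<le> length u"
  shows "Cyl u \<inter> Cyl v = (if take (length v) u = v then Cyl u else {})"
proof (cases "take (length v) u = v")
  case True
  then show ?thesis
    using Cyl_subset_take[OF assms(1), of "length v"] by auto
next
  case False
  then have "Cyl (take (length v) u) \<inter> Cyl v = {}"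
    using assms by (intro Cyl_disjoint) (auto simp: word_take)
  then show ?thesis
    using False Cyl_subset_take[OF assms(1), of "length v"] by auto
qed

lemma Cantor_covered_by_Cyl: "x \<in> Cantor \<Longrightarrow> \<exists>w\<in>words_eq n. x \<in> Cyl w"
proof (induction n arbitrary: x)
  case 0
  then show ?case
    by (auto simp: words_eq_def)
next
  case (Suc n)
  have "x \<in> S 0 ` Cantor \<union> S 2 ` Cantor"
    using Suc.prems unfolding Cantor_self_similar[symmetric] .
  then obtain a y where "a = 0 \<or> a = 2" "y \<in> Cantor" "x = S a y"
    by blast
  with Suc.IH obtain w where "w \<in> words_eq n" "x \<in> S a ` Cyl w"
    by blast
  then show ?case
    using \<open>a = 0 \<or> a = 2\<close> by (intro bexI[of _ "a # w"]) (auto simp: words_eq_def Cyl_Cons)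
qed

lemma sum_words_eq_ind_Cyl_at:
  assumes "w \<in> words_eq n" "x \<in> Cyl w"
  shows "(\<Sum>v\<in>words_eq n. f v * ind (Cyl v) x) = f w"
proof -
  have "ind (Cyl v) x = (if v = w then 1 else 0)" if "v \<in> words_eq n" for v
    using Cyl_disjoint[of v w] that assms by (auto simp: ind_def words_eq_def)
  then have "(\<Sum>v\<in>words_eq n. f v * ind (Cyl v) x) = (\<Sum>v\<in>words_eq n. if v = w then f v else 0)"
    by (intro sum.cong) auto
  then show ?thesis
    using assms(1) by (simp add: finite_words_eq)
qed

lemma ind_Cyl_eq_sum_words_eq:
  assumes "word u" "length u \<le> n"
  shows "ind (Cyl u) x = (\<Sum>v\<in>words_eq n. (if take (length u) v = u then 1 else 0) * ind (Cyl v) x)"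
proof (cases "x \<in> Cantor")
  case True
  then obtain w where w: "w \<in> words_eq n" "x \<in> Cyl w"
    using Cantor_covered_by_Cyl by blast
  then have "x \<in> Cyl u \<longleftrightarrow> take (length u) w = u"
    using Cyl_Int_Cyl[of w u] assms by (auto simp: words_eq_def split: if_splits)
  then show ?thesis
    using sum_words_eq_ind_Cyl_at[OF w] by (simp add: ind_def)
next
  case False
  then show ?thesis
    using assms Cyl_subset_Cantor by (fastforce simp: ind_def words_eq_def intro!: sum.neutral)
qed

definition fun_span :: "'i set \<Rightarrow> ('i \<Rightarrow> real \<Rightarrow> complex) \<Rightarrow> (real \<Rightarrow> complex) set" where
  "fun_span I b = {f. \<exists>c. f = (\<lambda>x. \<Sum>i\<in>I. c i * b i x)}"

lemma fun_span_intro: "f = (\<lambda>x. \<Sum>i\<in>I. c i * b i x) \<Longrightarrow> f \<in> fun_span I b"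
  unfolding fun_span_def by blast

lemma fun_span_base:
  assumes "finite I" "j \<in> I"
  shows "b j \<in> fun_span I b"
proof (rule fun_span_intro)
  show "b j = (\<lambda>x. \<Sum>i\<in>I. (if i = j then 1 else 0) * b i x)"
    using assms by (simp add: if_distrib[of "\<lambda>c. c * _"] cong: if_cong)
qed

lemma fun_span_lin_comb:
  assumes "f \<in> fun_span I b" "g \<in> fun_span I b"
  shows "(\<lambda>x. r * f x + s * g x) \<in> fun_span I b"
proof -
  obtain c d where "f = (\<lambda>x. \<Sum>i\<in>I. c i * b i x)" "g = (\<lambda>x. \<Sum>i\<in>I. d i * b i x)"
    using assms unfolding fun_span_def by blast
  then have "(\<lambda>x. r * f x + s * g x) = (\<lambda>x. \<Sum>i\<in>I. (r * c i + s * d i) * b i x)"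
    by (simp add: sum_distrib_left sum.distrib algebra_simps)
  then show ?thesis
    by (rule fun_span_intro)
qed

lemma fun_span_subset:
  assumes "\<forall>j\<in>J. b' j \<in> fun_span I b"
  shows "fun_span J b' \<subseteq> fun_span I b"
proof
  fix f assume "f \<in> fun_span J b'"
  then obtain d where f: "f = (\<lambda>x. \<Sum>j\<in>J. d j * b' j x)"
    unfolding fun_span_def by blast
  from assms have "\<forall>j\<in>J. \<exists>c. b' j = (\<lambda>x. \<Sum>i\<in>I. c i * b i x)"
    by (simp add: fun_span_def)
  then obtain c where c: "\<And>j. j \<in> J \<Longrightarrow> b' j = (\<lambda>x. \<Sum>i\<in>I. c j i * b i x)"
    by metis
  have "f = (\<lambda>x. \<Sum>j\<in>J. \<Sum>i\<in>I. d j * c j i * b i x)"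
    unfolding f by (intro ext sum.cong) (simp_all add: c sum_distrib_left mult.assoc)
  also have "\<dots> = (\<lambda>x. \<Sum>i\<in>I. (\<Sum>j\<in>J. d j * c j i) * b i x)"
    by (simp add: sum.swap[of _ J] sum_distrib_right)
  finally show "f \<in> fun_span I b"
    by (rule fun_span_intro)
qed

lemma basis_fun_None [simp]: "basis_fun None = phi"
  by (simp add: basis_fun_def)

lemma basis_fun_Some [simp]: "basis_fun (Some w) = haar w"
  by (simp add: basis_fun_def)

definition basis_index :: "nat \<Rightarrow> nat list option set" where
  "basis_index m = insert None (Some ` {w. word w \<and> length w < m})"

lemma finite_basis_index: "finite (basis_index m)"
proof -
  have "{w. word w \<and> length w < m} \<subseteq> words_le m"
    by (auto simp: words_le_def)
  then show ?thesis
    unfolding basis_index_def using finite_subset finite_words_le by blast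
qed

lemma ind_Cyl_in_basis_span:
  "word u \<Longrightarrow> length u \<le> m \<Longrightarrow> ind (Cyl u) \<in> fun_span (basis_index m) basis_fun"
proof (induction u rule: rev_induct)
  case Nil
  then show ?case
    using fun_span_base[OF finite_basis_index, of None m basis_fun]
    by (simp add: basis_index_def phi_def)
next
  case (snoc a v)
  then have v: "word v" "length v < m" and a: "a = 0 \<or> a = 2"
    by auto
  have ind_v: "ind (Cyl v) \<in> fun_span (basis_index m) basis_fun"
    using snoc v by simp
  have haar_v: "haar v \<in> fun_span (basis_index m) basis_fun"
    using v fun_span_base[OF finite_basis_index, of "Some v" m basis_fun]
    by (simp add: basis_index_def)
  have "ind (Cyl (v @ [a])) =
      (\<lambda>x. 1 / 2 * ind (Cyl v) x + (if a = 0 then 1 / 2 else - 1 / 2) * haar v x)"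
  proof
    fix x
    have "ind (Cyl v) x = ind (Cyl (v @ [0])) x + ind (Cyl (v @ [2])) x"
      using Cyl_split[of v] Cyl_disjoint[of "v @ [0]" "v @ [2]"] v(1) by (auto simp: ind_def)
    then show "ind (Cyl (v @ [a])) x =
        1 / 2 * ind (Cyl v) x + (if a = 0 then 1 / 2 else - 1 / 2) * haar v x"
      using a by (auto simp: haar_def field_simps)
  qed
  then show ?case
    using fun_span_lin_comb[OF ind_v haar_v, of "1 / 2" "if a = 0 then 1 / 2 else - 1 / 2"]
    by (simp only:)
qed

lemma Fm_eq_fun_span: "Fm m = fun_span (words_le m) (\<lambda>u. ind (Cyl u))"
  by (simp add: Fm_def fun_span_def)

lemma basis_fun_in_Fm: "i \<in> basis_index m \<Longrightarrow> basis_fun i \<in> Fm m"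
proof (cases i)
  case None
  have "ind (Cyl []) \<in> fun_span (words_le m) (\<lambda>u. ind (Cyl u))"
    by (intro fun_span_base finite_words_le) (simp add: words_le_def)
  then show ?thesis
    using None by (simp add: phi_def Fm_eq_fun_span)
next
  case (Some w)
  moreover assume "i \<in> basis_index m"
  ultimately have "w @ [a] \<in> words_le m" if "a = 0 \<or> a = 2" for a
    using that by (auto simp: basis_index_def words_le_def)
  then have "ind (Cyl (w @ [a])) \<in> fun_span (words_le m) (\<lambda>u. ind (Cyl u))"
    if "a = 0 \<or> a = 2" for a
    using that by (intro fun_span_base finite_words_le) auto
  then have "(\<lambda>x. 1 * ind (Cyl (w @ [0])) x + (- 1) * ind (Cyl (w @ [2])) x)
      \<in> fun_span (words_le m) (\<lambda>u. ind (Cyl u))"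
    by (intro fun_span_lin_comb) auto
  then show ?thesis
    using Some by (simp add: haar_def Fm_eq_fun_span)
qed

lemma Fm_eq_basis_span: "Fm m = fun_span (basis_index m) basis_fun"
proof
  show "Fm m \<subseteq> fun_span (basis_index m) basis_fun"
    unfolding Fm_eq_fun_span
    by (intro fun_span_subset) (auto simp: words_le_def intro: ind_Cyl_in_basis_span)
  show "fun_span (basis_index m) basis_fun \<subseteq> Fm m"
    unfolding Fm_eq_fun_span
    by (intro fun_span_subset) (auto intro: basis_fun_in_Fm[unfolded Fm_eq_fun_span])
qed

lemma phi_eq_ind_Cyl_Nil: "phi = ind (Cyl [])"
  by (simp add: phi_def)

lemma ind_eq_indicator: "ind A = indicator A"
  by (simp add: ind_def fun_eq_iff)

lemma ind_measurable [measurable]: "A \<in> sets M \<Longrightarrow> ind A \<in> borel_measurable M"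
  by (simp add: ind_eq_indicator)

lemma cnj_ip: "cnj (ip M f g) = ip M g f"
proof -
  have "cnj (ip M f g) = integral\<^sup>L M (\<lambda>x. cnj (cnj (f x) * g x))"
    unfolding ip_def by (rule Bochner_Integration.integral_cnj[symmetric])
  then show ?thesis
    by (simp add: ip_def mult.commute)
qed

lemma ip_diff_right:
  "integrable M (\<lambda>x. cnj (f x) * g x) \<Longrightarrow> integrable M (\<lambda>x. cnj (f x) * h x) \<Longrightarrow>
    ip M f (\<lambda>x. g x - h x) = ip M f g - ip M f h"
  by (simp add: ip_def right_diff_distrib)

lemma ip_diff_left:
  "integrable M (\<lambda>x. cnj (f x) * h x) \<Longrightarrow> integrable M (\<lambda>x. cnj (g x) * h x) \<Longrightarrow>
    ip M (\<lambda>x. f x - g x) h = ip M f h - ip M g h"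
  by (simp add: ip_def left_diff_distrib)

lemma ip_sum_right:
  "(\<And>i. i \<in> I \<Longrightarrow> integrable M (\<lambda>x. cnj (f x) * g i x)) \<Longrightarrow>
    ip M f (\<lambda>x. \<Sum>i\<in>I. c i * g i x) = (\<Sum>i\<in>I. c i * ip M f (g i))"
  by (simp add: ip_def sum_distrib_left mult.left_commute integral_sum)

lemma ip_sum_left:
  "(\<And>i. i \<in> I \<Longrightarrow> integrable M (\<lambda>x. cnj (g i x) * f x)) \<Longrightarrow>
    ip M (\<lambda>x. \<Sum>i\<in>I. c i * g i x) f = (\<Sum>i\<in>I. cnj (c i) * ip M (g i) f)"
  by (simp add: ip_def sum_distrib_right mult.assoc integral_sum)

lemma integrable_ind_mult:
  assumes "A \<in> sets M" "integrable M f"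
  shows "integrable M (\<lambda>x. cnj (ind A x) * f x)"
proof -
  have "(\<lambda>x. cnj (ind A x) * f x) = (\<lambda>x. indicator A x *\<^sub>R f x)"
    by (simp add: ind_def fun_eq_iff)
  then show ?thesis
    using integrable_mult_indicator[OF assms] by simp
qed

lemma L2_bounded:
  assumes "finite_measure M" "f \<in> borel_measurable M" "\<And>x. cmod (f x) \<le> B"
  shows "L2 M f"
proof -
  have "norm ((cmod (f x))\<^sup>2) \<le> B\<^sup>2" for x
    using assms(3)[of x] by (simp add: power_mono)
  moreover have "(\<lambda>x. (cmod (f x))\<^sup>2) \<in> borel_measurable M"
    using assms(2) by measurable
  ultimately have "integrable M (\<lambda>x. (cmod (f x))\<^sup>2)"
    by (intro finite_measure.integrable_const_bound[OF assms(1)] AE_I2)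
  then show ?thesis
    using assms(2) by (simp add: L2_def)
qed

lemma L2_imp_integrable:
  assumes "finite_measure M" "L2 M f"
  shows "integrable M f"
proof -
  have f: "f \<in> borel_measurable M" and sq: "integrable M (\<lambda>x. (cmod (f x))\<^sup>2)"
    using assms(2) by (auto simp: L2_def)
  have "(\<lambda>x. cmod (f x)) \<in> borel_measurable M"
    using f by measurable
  then have "integrable M (\<lambda>x. cmod (f x))"
    using finite_measure.square_integrable_imp_integrable[OF assms(1) _ sq] by blast
  then show ?thesis
    using integrable_norm_iff[OF f] by blast
qed

lemma ip_ind_ind:
  assumes "finite_measure M" "A \<in> sets M" "B \<in> sets M"
  shows "ip M (ind A) (ind B) = measure M (A \<inter> B)"
proof -
  have "(\<lambda>x. cnj (ind A x) * ind B x) = (\<lambda>x. complex_of_real (indicator (A \<inter> B) x))"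
    by (simp add: ind_def fun_eq_iff)
  moreover have "A \<inter> B \<inter> space M = A \<inter> B"
    using sets.sets_into_space[OF assms(3)] by blast
  ultimately show ?thesis
    by (simp add: ip_def integral_indicator)
qed

lemma sum_inverse_powers_of_two: "(\<Sum>n\<le>m. 1 / 2 ^ n :: real) = 2 - 1 / 2 ^ m"
  by (induction m) (auto simp: field_simps)

lemma sum_inverse_powers_of_two_above:
  "l \<le> m \<Longrightarrow> (\<Sum>n\<le>m. if n \<le> l then 0 else 1 / 2 ^ n :: real) = 1 / 2 ^ l - 1 / 2 ^ m"
proof (induction m rule: dec_induct)
  case (step k)
  then have "(\<Sum>n\<le>Suc k. if n \<le> l then 0 else 1 / 2 ^ n :: real) =
      1 / 2 ^ l - 1 / 2 ^ k + 1 / 2 ^ Suc k"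
    by simp
  then show ?case
    by simp
qed simp

lemma S_vimage_borel:
  assumes "A \<in> sets borel"
  shows "S a -` A \<inter> {0..1} \<in> sets borel"
proof -
  have "S a \<in> borel_measurable borel"
    unfolding S_def by measurable
  from measurable_sets[OF this assms] show ?thesis
    by auto
qed

locale cantor_measure_space =
  fixes M :: "real measure"
  assumes cantor_measure: "cantor_measure M"
begin

sublocale prob_space M
  using cantor_measure by (simp add: cantor_measure_def)

lemma sets_M [measurable_cong]: "sets M = sets borel"
  using cantor_measure by (simp add: cantor_measure_def)

lemma space_M: "space M = UNIV"
  using sets_eq_imp_space_eq[OF sets_M] by simp

lemma Cyl_in_sets [measurable]: "Cyl w \<in> sets M"
  using Cyl_borel by (simp add: sets_M)

lemma Cantor_in_sets [measurable]: "Cantor \<in> sets M"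
  using Cyl_in_sets[of "[]"] by simp

lemma measure_self_similar:
  assumes "A \<in> sets borel"
  shows "measure M A = (measure M (S 0 -` A \<inter> {0..1}) + measure M (S 2 -` A \<inter> {0..1})) / 2"
proof -
  have "ennreal (measure M A) =
      (ennreal (measure M (S 0 -` A \<inter> {0..1})) + ennreal (measure M (S 2 -` A \<inter> {0..1}))) / 2"
    using cantor_measure assms by (simp add: cantor_measure_def emeasure_eq_measure)
  also have "\<dots> =
      ennreal (measure M (S 0 -` A \<inter> {0..1}) + measure M (S 2 -` A \<inter> {0..1})) / ennreal 2"
    by simp
  also have "\<dots> = ennreal ((measure M (S 0 -` A \<inter> {0..1}) + measure M (S 2 -` A \<inter> {0..1})) / 2)"
    by (rule divide_ennreal) auto
  finally show ?thesis
    by simp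
qed

lemma measure_S_image:
  assumes a: "a = 0 \<or> a = 2" and "A \<subseteq> {0..1}" "S a ` A \<in> sets borel"
  shows "measure M (S a ` A) = measure M A / 2"
proof -
  have "S b -` S a ` A \<inter> {0..1} = (if b = a then A else {})" if b: "b = 0 \<or> b = 2" for b
  proof (cases "b = a")
    case True
    then show ?thesis
      using assms(2) inj_S[of a] by (auto simp: inj_vimage_image_eq)
  next
    case False
    then show ?thesis
      using S_neq_S[OF b a] assms(2) by auto
  qed
  then show ?thesis
    using measure_self_similar[OF assms(3)] a by auto
qed

lemma measure_cantor_level: "measure M (cantor_level n) = 1"
proof (induction n)
  case 0
  then show ?case
    using cantor_measure by (simp add: cantor_measure_def cantor_level_0 emeasure_eq_measure)
next
  case (Suc n)
  have "cantor_level (Suc n) \<in> sets borel"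
    by (simp add: closed_cantor_level)
  have pre: "1 \<le> measure M (S a -` cantor_level (Suc n) \<inter> {0..1})" if "a = 0 \<or> a = 2" for a
  proof -
    have "cantor_level n \<subseteq> S a -` cantor_level (Suc n) \<inter> {0..1}"
      using that cantor_level_subset by (auto simp: cantor_level_Suc)
    moreover have "S a -` cantor_level (Suc n) \<inter> {0..1} \<in> sets M"
      using S_vimage_borel[OF \<open>cantor_level (Suc n) \<in> sets borel\<close>] by (simp add: sets_M)
    ultimately show ?thesis
      using Suc.IH finite_measure_mono by (metis (no_types))
  qed
  have "1 \<le> measure M (cantor_level (Suc n))"
    using measure_self_similar[OF \<open>cantor_level (Suc n) \<in> sets borel\<close>] pre[of 0] pre[of 2]
    by simp
  then show ?case
    using prob_le_1[of "cantor_level (Suc n)"] by linarith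
qed

lemma measure_Cantor: "measure M Cantor = 1"
proof -
  have "AE x in M. x \<in> cantor_level n" for n
    using closed_cantor_level measure_cantor_level by (intro AE_prob_1) (simp add: sets_M)
  then have "AE x in M. x \<in> Cantor"
    by (simp add: Cantor_eq_Inter_cantor_level AE_all_countable)
  then show ?thesis
    using prob_Collect_eq_1[of "\<lambda>x. x \<in> Cantor"] Cantor_in_sets by (simp add: space_M)
qed

lemma measure_Cyl: "word w \<Longrightarrow> measure M (Cyl w) = 1 / 2 ^ length w"
proof (induction w)
  case (Cons a w)
  then have "measure M (Cyl (a # w)) = measure M (Cyl w) / 2"
    using measure_S_image[of a "Cyl w"] Cyl_subset_Cantor Cantor_subset Cyl_borel[of "a # w"]
    by (auto simp: Cyl_Cons)
  then show ?case
    using Cons by simp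
qed (simp add: measure_Cantor)

lemma ip_ind_Cyl:
  assumes "word u" "word v" "length v \<le> length u"
  shows "ip M (ind (Cyl u)) (ind (Cyl v)) = (if take (length v) u = v then 1 / 2 ^ length u else 0)"
  using ip_ind_ind[OF finite_measure_axioms Cyl_in_sets Cyl_in_sets] Cyl_Int_Cyl[OF assms]
    measure_Cyl[OF assms(1)]
  by simp

lemma integrable_ind_Cyl: "integrable M (ind (Cyl w))"
  by (rule integrable_const_bound[where B = 1]) (auto simp: ind_def)

lemma L2_phi: "L2 M phi"
  unfolding phi_eq_ind_Cyl_Nil
  by (rule L2_bounded[OF finite_measure_axioms, where B = 1]) (auto simp: ind_def)

lemma L2_haar: "L2 M (haar w)"
  unfolding haar_def
  by (rule L2_bounded[OF finite_measure_axioms, where B = 1]) (auto simp: ind_def)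

lemma integrable_phi: "integrable M phi"
  using L2_imp_integrable[OF finite_measure_axioms L2_phi] .

lemma integrable_haar: "integrable M (haar w)"
  using L2_imp_integrable[OF finite_measure_axioms L2_haar] .

lemma ip_ind_Cyl_commute: "ip M (ind (Cyl u)) (ind (Cyl v)) = ip M (ind (Cyl v)) (ind (Cyl u))"
  by (simp add: ip_ind_ind[OF finite_measure_axioms] Int_commute)

lemma ip_ind_Cyl_haar:
  assumes "word v" "word w"
  shows "ip M (ind (Cyl v)) (haar w) =
    (if length v \<le> length w then 0
     else ((if take (Suc (length w)) v = w @ [0] then 1 else 0)
         - (if take (Suc (length w)) v = w @ [2] then 1 else 0)) / 2 ^ length v)"
proof -
  have ip_a: "ip M (ind (Cyl v)) (ind (Cyl (w @ [a]))) =
      (if length v \<le> length w then (if take (length v) w = v then 1 / 2 ^ Suc (length w) else 0)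
       else if take (Suc (length w)) v = w @ [a] then 1 / 2 ^ length v else 0)"
    if "a = 0 \<or> a = 2" for a
  proof (cases "length v \<le> length w")
    case True
    then show ?thesis
      using ip_ind_Cyl[of "w @ [a]" v] that assms by (simp add: ip_ind_Cyl_commute)
  next
    case False
    then show ?thesis
      using ip_ind_Cyl[of v "w @ [a]"] that assms by simp
  qed
  have "ip M (ind (Cyl v)) (haar w) =
      ip M (ind (Cyl v)) (ind (Cyl (w @ [0]))) - ip M (ind (Cyl v)) (ind (Cyl (w @ [2])))"
    unfolding haar_def by (intro ip_diff_right integrable_ind_mult Cyl_in_sets integrable_ind_Cyl)
  then show ?thesis
    using ip_a[of 0] ip_a[of 2] by (simp add: diff_divide_distrib)
qed

lemma ip_phi_phi: "ip M phi phi = 1"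
  using ip_ind_ind[OF finite_measure_axioms Cyl_in_sets Cyl_in_sets, of "[]" "[]"] measure_Cantor
  by (simp add: phi_eq_ind_Cyl_Nil)

lemma ip_phi_haar: "word w \<Longrightarrow> ip M phi (haar w) = 0"
  using ip_ind_Cyl_haar[of "[]" w] by (simp add: phi_eq_ind_Cyl_Nil)

lemma ip_haar_haar:
  assumes "word v" "word w"
  shows "ip M (haar v) (haar w) = (if v = w then 1 / 2 ^ length w else 0)"
proof -
  have *: "ip M (haar v) (haar w) = (if v = w then 1 / 2 ^ length w else 0)"
    if "word v" "word w" "length v \<le> length w" for v w
  proof -
    have "ip M (haar v) (haar w) =
        ip M (ind (Cyl (v @ [0]))) (haar w) - ip M (ind (Cyl (v @ [2]))) (haar w)"
      unfolding haar_def[of v]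
      by (intro ip_diff_left integrable_ind_mult Cyl_in_sets integrable_haar)
    then show ?thesis
      using that ip_ind_Cyl_haar[of "v @ [0]" w] ip_ind_Cyl_haar[of "v @ [2]" w]
      by (auto simp: le_Suc_eq)
  qed
  show ?thesis
  proof (cases "length v \<le> length w")
    case False
    then have "ip M (haar w) (haar v) = 0"
      using *[of w v] assms by auto
    then show ?thesis
      using False cnj_ip[of M "haar w" "haar v"] by auto
  qed (use * assms in simp)
qed

lemma ip_haar_phi: "word w \<Longrightarrow> ip M (haar w) phi = 0"
  using cnj_ip[of M phi "haar w"] ip_phi_haar by simp

lemma orthogonal_basis_Fm: "orthogonal_basis M (basis_index m) basis_fun (Fm m)"
proof -
  have "L2 M (basis_fun i) \<and> ip M (basis_fun i) (basis_fun i) \<noteq> 0" if "i \<in> basis_index m" for i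
    using that by (cases i) (auto simp: basis_index_def L2_phi L2_haar ip_phi_phi ip_haar_haar)
  moreover have "ip M (basis_fun i) (basis_fun j) = 0"
    if "i \<in> basis_index m" "j \<in> basis_index m" "i \<noteq> j" for i j
    using that by (cases i; cases j) (auto simp: basis_index_def ip_phi_haar ip_haar_phi ip_haar_haar)
  ultimately show ?thesis
    unfolding orthogonal_basis_def Fm_eq_basis_span
    by (simp add: finite_basis_index fun_span_def)
qed

lemma ip_ind_Cyl_sum_words_eq:
  assumes "v \<in> words_eq n"
  shows "ip M (ind (Cyl v)) (\<lambda>x. \<Sum>w\<in>words_eq n. d w * ind (Cyl w) x) = d v / 2 ^ n"
proof -
  have "ip M (ind (Cyl v)) (\<lambda>x. \<Sum>w\<in>words_eq n. d w * ind (Cyl w) x) =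
      (\<Sum>w\<in>words_eq n. d w * ip M (ind (Cyl v)) (ind (Cyl w)))"
    by (intro ip_sum_right integrable_ind_mult Cyl_in_sets integrable_ind_Cyl)
  also have "\<dots> = (\<Sum>w\<in>words_eq n. if w = v then d w / 2 ^ n else 0)"
    using assms ip_ind_Cyl by (intro sum.cong) (auto simp: words_eq_def)
  also have "\<dots> = d v / 2 ^ n"
    using assms by (simp add: finite_words_eq)
  finally show ?thesis .
qed

lemma Gn_eq_fun_span: "Gn n = fun_span (words_eq n) (\<lambda>w. ind (Cyl w))"
  by (simp add: Gn_def fun_span_def)

lemma orthogonal_Gn_iff:
  assumes "integrable M f"
  shows "(\<forall>h\<in>Gn n. ip M h f = 0) \<longleftrightarrow> (\<forall>w\<in>words_eq n. ip M (ind (Cyl w)) f = 0)"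
proof
  assume "\<forall>h\<in>Gn n. ip M h f = 0"
  moreover have "ind (Cyl w) \<in> Gn n" if "w \<in> words_eq n" for w
    unfolding Gn_eq_fun_span using fun_span_base[OF finite_words_eq that] .
  ultimately show "\<forall>w\<in>words_eq n. ip M (ind (Cyl w)) f = 0"
    by blast
next
  assume orth: "\<forall>w\<in>words_eq n. ip M (ind (Cyl w)) f = 0"
  show "\<forall>h\<in>Gn n. ip M h f = 0"
  proof
    fix h assume "h \<in> Gn n"
    then obtain e where "h = (\<lambda>x. \<Sum>w\<in>words_eq n. e w * ind (Cyl w) x)"
      by (auto simp: Gn_def)
    then have "ip M h f = (\<Sum>w\<in>words_eq n. cnj (e w) * ip M (ind (Cyl w)) f)"
      by (simp only:) (intro ip_sum_left integrable_ind_mult Cyl_in_sets assms)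
    then show "ip M h f = 0"
      using orth by simp
  qed
qed

lemma En_eq_sum:
  assumes f: "integrable M f"
  shows "En M n f = (\<lambda>x. \<Sum>w\<in>words_eq n. (2 ^ n * ip M (ind (Cyl w)) f) * ind (Cyl w) x)"
proof -
  define c where "c w = 2 ^ n * ip M (ind (Cyl w)) f" for w
  have orth_iff: "(\<forall>h\<in>Gn n. ip M h (\<lambda>x. f x - (\<Sum>w\<in>words_eq n. d w * ind (Cyl w) x)) = 0)
      \<longleftrightarrow> (\<forall>w\<in>words_eq n. d w = c w)" for d
  proof -
    have g: "integrable M (\<lambda>x. \<Sum>w\<in>words_eq n. d w * ind (Cyl w) x)"
      by (intro Bochner_Integration.integrable_sum Bochner_Integration.integrable_mult_right
          integrable_ind_Cyl)
    have "ip M (ind (Cyl v)) (\<lambda>x. f x - (\<Sum>w\<in>words_eq n. d w * ind (Cyl w) x)) =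
        ip M (ind (Cyl v)) f - d v / 2 ^ n" if "v \<in> words_eq n" for v
      using ip_diff_right[OF integrable_ind_mult[OF Cyl_in_sets f]
          integrable_ind_mult[OF Cyl_in_sets g]]
        ip_ind_Cyl_sum_words_eq[OF that]
      by simp
    then show ?thesis
      using orthogonal_Gn_iff[of "\<lambda>x. f x - (\<Sum>w\<in>words_eq n. d w * ind (Cyl w) x)"] f g
      by (auto simp: c_def field_simps)
  qed
  show ?thesis
    unfolding En_def c_def[symmetric]
  proof (rule some_equality)
    show "(\<lambda>x. \<Sum>w\<in>words_eq n. c w * ind (Cyl w) x) \<in> Gn n \<and>
        (\<forall>h\<in>Gn n. ip M h (\<lambda>x. f x - (\<Sum>w\<in>words_eq n. c w * ind (Cyl w) x)) = 0)"
      using orth_iff[of c] by (auto simp: Gn_def)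
  next
    fix g assume "g \<in> Gn n \<and> (\<forall>h\<in>Gn n. ip M h (\<lambda>x. f x - g x) = 0)"
    then obtain d where g: "g = (\<lambda>x. \<Sum>w\<in>words_eq n. d w * ind (Cyl w) x)"
      and "\<forall>w\<in>words_eq n. d w = c w"
      using orth_iff by (auto simp: Gn_def)
    then show "g = (\<lambda>x. \<Sum>w\<in>words_eq n. c w * ind (Cyl w) x)"
      by simp
  qed
qed

lemma Km_eq_sum_En:
  assumes "integrable M f"
  shows "Km M m f x = (\<Sum>n\<le>m. complex_of_real (1 / 2 ^ n) * En M n f x)"
proof -
  have "complex_of_real (1 / 2 ^ n) * En M n f x =
      (\<Sum>w\<in>words_eq n. ip M (ind (Cyl w)) f * ind (Cyl w) x)" for n
    by (simp add: En_eq_sum[OF assms] sum_distrib_left)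
  then show ?thesis
    unfolding Km_def sum_words_le_by_length by simp
qed

lemma En_phi: "En M n phi = phi"
proof -
  have "ip M (ind (Cyl w)) phi = 1 / 2 ^ n" if "w \<in> words_eq n" for w
    using that ip_ind_Cyl[of w "[]"] by (simp add: phi_eq_ind_Cyl_Nil words_eq_def)
  then have "En M n phi = (\<lambda>x. \<Sum>w\<in>words_eq n. 1 * ind (Cyl w) x)"
    by (simp add: En_eq_sum integrable_phi)
  also have "\<dots> = phi"
    using ind_Cyl_eq_sum_words_eq[of "[]" n] by (simp add: phi_eq_ind_Cyl_Nil fun_eq_iff)
  finally show ?thesis .
qed

lemma En_haar:
  assumes "word w"
  shows "En M n (haar w) = (if n \<le> length w then (\<lambda>x. 0) else haar w)"
proof -
  let ?a = "\<lambda>v. if take (Suc (length w)) v = w @ [0] then 1 else 0 :: complex"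
  let ?b = "\<lambda>v. if take (Suc (length w)) v = w @ [2] then 1 else 0 :: complex"
  have "En M n (haar w) =
      (\<lambda>x. \<Sum>v\<in>words_eq n. (if n \<le> length w then 0 else ?a v - ?b v) * ind (Cyl v) x)"
    using ip_ind_Cyl_haar[OF _ assms]
    by (auto simp: En_eq_sum integrable_haar words_eq_def intro!: sum.cong)
  also have "\<dots> = (if n \<le> length w then (\<lambda>x. 0) else haar w)"
  proof (cases "n \<le> length w")
    case False
    then have "(\<Sum>v\<in>words_eq n. (?a v - ?b v) * ind (Cyl v) x) = haar w x" for x
      using ind_Cyl_eq_sum_words_eq[of "w @ [0]" n x] ind_Cyl_eq_sum_words_eq[of "w @ [2]" n x] assms
      by (simp add: haar_def left_diff_distrib sum_subtractf)
    then show ?thesis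
      using False by auto
  qed simp
  finally show ?thesis .
qed

lemma Km_phi: "Km M m phi = (\<lambda>x. complex_of_real (2 - 1 / 2 ^ m) * phi x)"
proof
  fix x
  have "Km M m phi x = complex_of_real (\<Sum>n\<le>m. 1 / 2 ^ n) * phi x"
    by (simp add: Km_eq_sum_En integrable_phi En_phi sum_distrib_right)
  then show "Km M m phi x = complex_of_real (2 - 1 / 2 ^ m) * phi x"
    by (simp only: sum_inverse_powers_of_two)
qed

lemma Km_haar:
  assumes "word w" "length w < m"
  shows "Km M m (haar w) =
    (\<lambda>x. complex_of_real ((1 / 2 ^ length w) * (1 - 1 / 2 ^ (m - length w))) * haar w x)"
proof
  fix x
  have "Km M m (haar w) x =
      (\<Sum>n\<le>m. complex_of_real (if n \<le> length w then 0 else 1 / 2 ^ n) * haar w x)"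
    unfolding Km_eq_sum_En[OF integrable_haar] En_haar[OF assms(1)] by (intro sum.cong) auto
  also have "\<dots> = complex_of_real (\<Sum>n\<le>m. if n \<le> length w then 0 else 1 / 2 ^ n) * haar w x"
    by (simp add: sum_distrib_right)
  also have "(\<Sum>n\<le>m. if n \<le> length w then 0 else 1 / 2 ^ n) =
      1 / 2 ^ length w - 1 / (2::real) ^ m"
    using assms(2) by (simp add: sum_inverse_powers_of_two_above)
  also have "\<dots> = (1 / 2 ^ length w) * (1 - 1 / 2 ^ (m - length w))"
    using assms(2) by (simp add: field_simps power_add[symmetric])
  finally show "Km M m (haar w) x =
      complex_of_real ((1 / 2 ^ length w) * (1 - 1 / 2 ^ (m - length w))) * haar w x" .
qed

end

theorem proposition3p1:
  fixes M :: "real measure" and m :: nat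
  assumes "cantor_measure M"
  shows "orthogonal_basis M (insert None (Some ` {w. word w \<and> length w < m})) basis_fun (Fm m)
    \<and> Km M m phi = (\<lambda>x. complex_of_real (2 - 1 / 2 ^ m) * phi x)
    \<and> (\<forall>w. word w \<and> length w < m \<longrightarrow>
         Km M m (haar w) = (\<lambda>x. complex_of_real ((1 / 2 ^ length w) * (1 - 1 / 2 ^ (m - length w))) * haar w x))
    \<and> (\<forall>f. L2 M f \<longrightarrow> (AE x in M. Km M m f x = (\<Sum>n\<le>m. complex_of_real (1 / 2 ^ n) * En M n f x)))"
proof -
  interpret cantor_measure_space M
    using assms by unfold_locales
  have "\<forall>f. L2 M f \<longrightarrow> (AE x in M. Km M m f x = (\<Sum>n\<le>m. complex_of_real (1 / 2 ^ n) * En M n f x))"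
    by (intro allI impI AE_I2 Km_eq_sum_En L2_imp_integrable[OF finite_measure_axioms])
  then show ?thesis
    using orthogonal_basis_Fm[of m] Km_phi Km_haar by (simp add: basis_index_def)
qed

end
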